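(* For every integer $n\ge 0$, $$B_{n+1}\!\left(t+\frac{1}{t}\right)=\sum_{i=0}^{n}t^{\nu(n-i)-\nu(i)}.$$
   Context: The Stern polynomials $B_n(t)\in\mathbb{Z}[t]$, $n\ge 0$, are defined by $B_0(t)=0$, $B_1(t)=1$, $B_{2n}(t)=tB_n(t)$ and $B_{2n+1}(t)=B_n(t)+B_{n+1}(t)$ for $n\ge 1$. For $n\ge 0$, $\nu(n)$ denotes the number of digits $1$ in the binary representation of $n$. *)

theory Defs
  imports "HOL-Computational_Algebra.Polynomial"
begin

function stern :: "nat \<Rightarrow> int poly" where
  "stern n = (if n = 0 then 0 else if n = 1 then 1
              else if even n then [:0, 1:] * stern (n div 2)
              else stern (n div 2) + stern (n div 2 + 1))"
  by auto
termination
  by (relation "measure id") (auto elim!: oddE)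

declare stern.simps [simp del]

fun nu :: "nat \<Rightarrow> nat" where
  "nu n = (if n = 0 then 0 else n mod 2 + nu (n div 2))"

declare nu.simps [simp del]

end

theory Submission
  imports Defs
begin

text \<open>
  Write R(n) = \<Sum>i=0..n. t^(\<nu>(n-i) - \<nu>(i)) for the right-hand side and
  E(n) = B(n+1)(t + 1/t) for the left-hand side.  Both sequences satisfy
      X(0) = 1,   X(2k+1) = (t + 1/t) X(k),   X(2k+2) = X(k) + X(k+1),
  which determines them uniquely.  For E this is the Stern recursion
  B(2m) = t B(m), B(2m+1) = B(m) + B(m+1) evaluated at t + 1/t.  For R one
  splits the summation index into even and odd values i = 2j, 2j+1: since
  \<nu>(2a) = \<nu>(a) and \<nu>(2a+1) = \<nu>(a) + 1, every summand of R(2k+1) is t or 1/t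
  times a summand of R(k), while the even- and odd-indexed summands of
  R(2k+2) are exactly the summands of R(k+1) and of R(k), respectively.
\<close>

lemma nu_0 [simp]: "nu 0 = 0"
  by (simp add: nu.simps)

lemma nu_double [simp]: "nu (2 * a) = nu a"
  by (cases "a = 0") (simp_all add: nu.simps[of "2 * a"])

lemma nu_double_Suc [simp]: "nu (Suc (2 * a)) = Suc (nu a)"
  by (simp add: nu.simps[of "Suc (2 * a)"])

lemma stern_1 [simp]: "stern (Suc 0) = 1"
  by (simp add: stern.simps)

lemma stern_double: "k \<ge> 1 \<Longrightarrow> stern (2 * k) = [:0, 1:] * stern k"
  by (simp add: stern.simps[of "2 * k"])

lemma stern_double_Suc: "k \<ge> 1 \<Longrightarrow> stern (Suc (2 * k)) = stern k + stern (Suc k)"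
  by (simp add: stern.simps[of "Suc (2 * k)"])

lemma poly_of_int_add:
  "poly (map_poly (of_int :: int \<Rightarrow> 'a::comm_ring_1) (p + q)) x
     = poly (map_poly of_int p) x + poly (map_poly of_int q) x"
proof -
  have "map_poly (of_int :: int \<Rightarrow> 'a) (p + q) = map_poly of_int p + map_poly of_int q"
    by (intro poly_eqI) (simp add: coeff_map_poly)
  then show ?thesis
    by simp
qed

lemma poly_of_int_times_var:
  "poly (map_poly (of_int :: int \<Rightarrow> 'a::comm_ring_1) ([:0, 1:] * p)) x
     = x * poly (map_poly of_int p) x"
  by (simp add: map_poly_pCons)

definition nu_weight :: "'a::field \<Rightarrow> nat \<Rightarrow> nat \<Rightarrow> 'a" where
  "nu_weight t n i = t powi (int (nu (n - i)) - int (nu i))"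

definition nu_sum :: "'a::field \<Rightarrow> nat \<Rightarrow> 'a" where
  "nu_sum t n = (\<Sum>i = 0..n. nu_weight t n i)"

lemma nu_weight_odd_even:
  assumes "t \<noteq> 0" and "j \<le> k"
  shows "nu_weight t (Suc (2 * k)) (2 * j) = t * nu_weight t k j"
proof -
  have "Suc (2 * k) - 2 * j = Suc (2 * (k - j))"
    using assms(2) by simp
  then have exponent: "int (nu (Suc (2 * k) - 2 * j)) - int (nu (2 * j))
      = (int (nu (k - j)) - int (nu j)) + 1"
    by simp
  show ?thesis
    unfolding nu_weight_def exponent power_int_add_1'[OF disjI1[OF assms(1)]] ..
qed

lemma nu_weight_odd_odd:
  assumes "t \<noteq> 0"
  shows "nu_weight t (Suc (2 * k)) (Suc (2 * j)) = (1 / t) * nu_weight t k j"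
proof -
  have "Suc (2 * k) - Suc (2 * j) = 2 * (k - j)"
    by simp
  then have exponent: "int (nu (Suc (2 * k) - Suc (2 * j))) - int (nu (Suc (2 * j)))
      = (int (nu (k - j)) - int (nu j)) - 1"
    by simp
  show ?thesis
    unfolding nu_weight_def exponent power_int_diff[OF disjI1[OF assms(1)]] by simp
qed

lemma nu_weight_even_even: "nu_weight t (2 * m) (2 * j) = nu_weight t m j"
proof -
  have "2 * m - 2 * j = 2 * (m - j)"
    by simp
  then show ?thesis
    by (simp add: nu_weight_def)
qed

lemma nu_weight_even_odd:
  assumes "j \<le> k"
  shows "nu_weight t (2 * Suc k) (Suc (2 * j)) = nu_weight t k j"
proof -
  have "2 * Suc k - Suc (2 * j) = Suc (2 * (k - j))"
    using assms by simp
  then show ?thesis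
    by (simp add: nu_weight_def)
qed

lemma nu_sum_0: "nu_sum t 0 = 1"
  by (simp add: nu_sum_def nu_weight_def)

lemma nu_sum_odd:
  assumes "t \<noteq> 0"
  shows "nu_sum t (Suc (2 * k)) = (t + 1 / t) * nu_sum t k"
proof -
  have "nu_sum t (Suc (2 * k))
      = (\<Sum>j\<le>k. nu_weight t (Suc (2 * k)) (2 * j) + nu_weight t (Suc (2 * k)) (Suc (2 * j)))"
    by (simp only: nu_sum_def atLeast0AtMost sum.in_pairs_0)
  also have "\<dots> = (\<Sum>j\<le>k. (t + 1 / t) * nu_weight t k j)"
    using assms by (intro sum.cong) (simp_all add: nu_weight_odd_even nu_weight_odd_odd distrib_right)
  finally show ?thesis
    by (simp only: nu_sum_def atLeast0AtMost sum_distrib_left)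
qed

lemma nu_sum_even: "nu_sum t (2 * Suc k) = nu_sum t k + nu_sum t (Suc k)"
proof -
  let ?w = "nu_weight t (2 * Suc k)"
  let ?even = "\<Sum>j\<le>k. ?w (2 * j)" and ?odd = "\<Sum>j\<le>k. ?w (Suc (2 * j))"
  have "2 * Suc k = Suc (Suc (2 * k))"
    by simp
  then have "nu_sum t (2 * Suc k) = (\<Sum>i\<le>Suc (2 * k). ?w i) + ?w (2 * Suc k)"
    by (simp only: nu_sum_def atLeast0AtMost sum.atMost_Suc)
  also have "\<dots> = (?even + ?odd) + ?w (2 * Suc k)"
    by (simp only: sum.in_pairs_0 sum.distrib)
  also have "\<dots> = (?even + ?w (2 * Suc k)) + ?odd"
    by (simp only: add_ac)
  also have "?even + ?w (2 * Suc k) = (\<Sum>j\<le>Suc k. ?w (2 * j))"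
    by (simp only: sum.atMost_Suc)
  also have "\<dots> = nu_sum t (Suc k)"
    unfolding nu_sum_def atLeast0AtMost by (intro sum.cong refl nu_weight_even_even)
  also have "?odd = nu_sum t k"
    unfolding nu_sum_def atLeast0AtMost by (intro sum.cong refl nu_weight_even_odd) simp
  finally show ?thesis
    by (simp only: ac_simps)
qed

lemma halving_induct [case_names zero odd even]:
  assumes "P 0"
    and "\<And>k. P k \<Longrightarrow> P (Suc (2 * k))"
    and "\<And>k. P k \<Longrightarrow> P (Suc k) \<Longrightarrow> P (2 * Suc k)"
  shows "P n"
proof (induction n rule: less_induct)
  case (less n)
  have "n = 0 \<or> (\<exists>k. n = Suc (2 * k)) \<or> (\<exists>k. n = 2 * Suc k)"
    by presburger
  then show ?case
    using assms less by auto
qed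

lemma stern_eval_eq_nu_sum:
  fixes t :: "'a::field"
  assumes "t \<noteq> 0"
  shows "poly (map_poly of_int (stern (Suc n))) (t + 1 / t) = nu_sum t n"
proof (induction n rule: halving_induct)
  case zero
  show ?case
    by (simp add: nu_sum_0)
next
  case (odd k)
  have "stern (Suc (Suc (2 * k))) = [:0, 1:] * stern (Suc k)"
    using stern_double[of "Suc k"] by simp
  then show ?case
    using odd by (simp only: poly_of_int_times_var nu_sum_odd[OF assms])
next
  case (even k)
  have "stern (Suc (2 * Suc k)) = stern (Suc k) + stern (Suc (Suc k))"
    using stern_double_Suc[of "Suc k"] by simp
  then show ?case
    using even by (simp only: poly_of_int_add nu_sum_even)
qed

theorem theorem3p7:
  fixes n :: nat and t :: real
  assumes "t \<noteq> 0"
  shows "poly (map_poly of_int (stern (n + 1))) (t + 1 / t)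
           = (\<Sum>i = 0..n. t powi (int (nu (n - i)) - int (nu i)))"
  using stern_eval_eq_nu_sum[OF assms, of n] by (simp add: nu_sum_def nu_weight_def)

end
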